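(* Let $\alpha\in(0,\pi)$ and let $a,c\in\mathbb{R}^2$ be two distinct points. Then a plane $\alpha$-bend multigraph (resp. a plane $\alpha$-arc multigraph) contains at most two edges between $a$ and $c$, and at most one of them in each of the two open halfplanes bounded by the line $ac$.
   Context: For $\alpha\in(0,\pi)$, an $\alpha$-bend edge between points $a$ and $c$ is a polyline $(a,b,c)$ with a single bend point $b$ (not on the line $ac$) such that the interior angle of the triangle $abc$ at $b$ equals $\alpha$. An $\alpha$-arc edge between $a$ and $c$ is a circular arc with endpoints $a$ and $c$ and central angle $2(\pi-\alpha)$. An $\alpha$-bend (resp. $\alpha$-arc) multigraph is a multigraph embedded in the plane (vertices are distinct points; edges are curves between their endpoints that pairwise do not cross, meet only at common endpoints, and contain no vertex in their relative interior; parallel edges are allowed) in which every edge is an $\alpha$-bend (resp. $\alpha$-arc) edge. *)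

theory Defs
  imports "HOL-Analysis.Analysis"
begin

definition angle_at :: "complex \<Rightarrow> complex \<Rightarrow> complex \<Rightarrow> real" where
  "angle_at u b w = arccos (((u - b) \<bullet> (w - b)) / (norm (u - b) * norm (w - b)))"

definition bend_edge :: "real \<Rightarrow> complex \<Rightarrow> complex \<Rightarrow> complex set \<Rightarrow> bool" where
  "bend_edge \<alpha> u w C \<longleftrightarrow>
     (\<exists>b. \<not> collinear {u, b, w} \<and> angle_at u b w = \<alpha> \<and>
          C = closed_segment u b \<union> closed_segment b w)"

definition arc_edge :: "real \<Rightarrow> complex \<Rightarrow> complex \<Rightarrow> complex set \<Rightarrow> bool" where
  "arc_edge \<alpha> u w C \<longleftrightarrow>
     (\<exists>z0 r \<theta>. r > 0 \<and>
        C = (\<lambda>t. z0 + complex_of_real r * cis t) ` {\<theta> .. \<theta> + 2 * (pi - \<alpha>)} \<and>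
        {u, w} = {z0 + complex_of_real r * cis \<theta>, z0 + complex_of_real r * cis (\<theta> + 2 * (pi - \<alpha>))})"

definition plane_multigraph ::
  "complex set \<Rightarrow> 'e set \<Rightarrow> ('e \<Rightarrow> complex) \<Rightarrow> ('e \<Rightarrow> complex) \<Rightarrow> ('e \<Rightarrow> complex set) \<Rightarrow> bool" where
  "plane_multigraph V E src tgt crv \<longleftrightarrow>
     (\<forall>e\<in>E. src e \<in> V \<and> tgt e \<in> V \<and>
        (\<exists>g. arc g \<and> pathstart g = src e \<and> pathfinish g = tgt e \<and> path_image g = crv e)) \<and>
     (\<forall>e\<in>E. \<forall>v\<in>V. v \<in> crv e \<longrightarrow> v = src e \<or> v = tgt e) \<and>
     (\<forall>e1\<in>E. \<forall>e2\<in>E. e1 \<noteq> e2 \<longrightarrow>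
        crv e1 \<inter> crv e2 \<subseteq> {src e1, tgt e1} \<inter> {src e2, tgt e2})"

definition left_halfplane :: "complex \<Rightarrow> complex \<Rightarrow> complex set" where
  "left_halfplane a c = {z. Im (cnj (c - a) * (z - a)) > 0}"

definition right_halfplane :: "complex \<Rightarrow> complex \<Rightarrow> complex set" where
  "right_halfplane a c = {z. Im (cnj (c - a) * (z - a)) < 0}"

end

theory Submission
  imports Defs
begin

text \<open>Every edge between a and c carries a witness point off the line ac: its bend
  point, resp. the midpoint of its arc. In the frame a = 0, c = 1 the bend points of
  \<alpha>-bend edges on one side of the line lie on a single circle through 0 and 1
  (inscribed angle theorem), and the order of two such points seen from 0 is the
  reverse of their order seen from 1; hence the first segment of one edge crosses the
  second segment of the other. The arc midpoints on one side even coincide. Either way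
  two edges whose witnesses lie on the same side meet outside {a, c}, which a plane
  multigraph forbids, so the side of the witness determines the edge.\<close>

lemma Im_div_eq_Im_cnj_mult:
  "Im ((z - a) / (c - a)) = Im (cnj (c - a) * (z - a)) / (cmod (c - a))\<^sup>2"
  by (simp add: complex_div_cnj[of "z - a"] mult.commute Im_divide_of_real)

lemma left_halfplane_eq:
  "a \<noteq> c \<Longrightarrow> left_halfplane a c = {z. 0 < Im ((z - a) / (c - a))}"
  by (simp add: left_halfplane_def Im_div_eq_Im_cnj_mult zero_less_divide_iff)

lemma right_halfplane_eq:
  "a \<noteq> c \<Longrightarrow> right_halfplane a c = {z. Im ((z - a) / (c - a)) < 0}"
  by (simp add: right_halfplane_def Im_div_eq_Im_cnj_mult divide_less_0_iff)

lemma affine_image_in_closed_segment: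
  fixes a d :: complex
  assumes "x \<in> closed_segment u v"
  shows "a + d * x \<in> closed_segment (a + d * u) (a + d * v)"
proof -
  obtain t where t: "0 \<le> t" "t \<le> 1" and x: "x = (1 - t) *\<^sub>R u + t *\<^sub>R v"
    using assms by (auto simp: in_segment)
  have "a + d * x = (1 - t) *\<^sub>R (a + d * u) + t *\<^sub>R (a + d * v)"
    unfolding x by (simp add: scaleR_conv_of_real algebra_simps)
  then show ?thesis
    using t by (auto simp: in_segment)
qed

lemma collinear_if_Im_div_eq_0:
  assumes "Im ((b - a) / (c - a)) = 0"
  shows "collinear {a, b, c}"
proof (cases "a = c")
  case False
  define t where "t = Re ((b - a) / (c - a))"
  have "b = a + (c - a) * of_real t"
    using assms False by (simp add: t_def complex_is_Real_iff[symmetric] field_simps)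
  then have "b = (1 - t) *\<^sub>R a + (1 - (1 - t)) *\<^sub>R c"
    by (simp add: scaleR_conv_of_real algebra_simps)
  then show ?thesis
    unfolding collinear_3_expand by blast
qed (simp add: insert_commute collinear_2)

lemma angle_at_eq_arccos_cnj_mult:
  "angle_at a b c = arccos (Re (cnj (a - b) * (c - b)) / cmod (cnj (a - b) * (c - b)))"
proof -
  have "cmod (cnj (a - b) * (c - b)) = cmod (a - b) * cmod (c - b)"
    by (simp only: norm_mult complex_mod_cnj)
  moreover have "Re (cnj (a - b) * (c - b)) = (a - b) \<bullet> (c - b)"
    by (simp add: inner_complex_def algebra_simps)
  ultimately show ?thesis
    by (simp add: angle_at_def)
qed

lemma cot_arccos_Re_div_cmod:
  assumes "Im z \<noteq> 0"
  shows "cot (arccos (Re z / cmod z)) = Re z / \<bar>Im z\<bar>"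
proof -
  have z: "cmod z > 0" using assms by auto
  have bound: "\<bar>Re z / cmod z\<bar> \<le> 1"
    using z abs_Re_le_cmod[of z] by (simp add: abs_div)
  have "1 - (Re z / cmod z)\<^sup>2 = ((cmod z)\<^sup>2 - (Re z)\<^sup>2) / (cmod z)\<^sup>2"
    using z by (simp add: field_simps)
  also have "\<dots> = (Im z / cmod z)\<^sup>2"
    by (simp add: cmod_power2 power_divide)
  finally have sq: "1 - (Re z / cmod z)\<^sup>2 = (Im z / cmod z)\<^sup>2" .
  have "sin (arccos (Re z / cmod z)) = \<bar>Im z\<bar> / cmod z"
    using bound sq z by (simp add: sin_arccos_abs)
  then show ?thesis
    using bound z by (simp add: cot_def cos_arccos_abs)
qed

lemma angle_at_locus:
  fixes a b c :: complex
  defines "w \<equiv> (b - a) / (c - a)"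
  assumes "a \<noteq> c" and "Im w \<noteq> 0"
  shows "(Re w)\<^sup>2 + (Im w)\<^sup>2 - Re w = cot (angle_at a b c) * \<bar>Im w\<bar>"
proof -
  define v where "v = cnj w * (w - 1)"
  define r where "r = (cmod (c - a))\<^sup>2"
  have r: "r > 0" using assms(2) by (simp add: r_def)
  have b: "b = a + (c - a) * w" using assms(2) by (simp add: w_def)
  have "cnj (a - b) * (c - b) = of_real r * v"
    unfolding b v_def r_def complex_norm_square by (simp add: algebra_simps)
  then have "Re (cnj (a - b) * (c - b)) / cmod (cnj (a - b) * (c - b)) = Re v / cmod v"
    using r by (simp add: norm_mult)
  then have angle: "angle_at a b c = arccos (Re v / cmod v)"
    by (simp add: angle_at_eq_arccos_cnj_mult)
  have Im_v: "Im v = Im w" and Re_v: "Re v = (Re w)\<^sup>2 + (Im w)\<^sup>2 - Re w"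
    by (simp_all add: v_def power2_eq_square algebra_simps)
  show ?thesis
    using assms(3) cot_arccos_Re_div_cmod[of v] by (simp add: angle Im_v Re_v)
qed

text \<open>x / y and (1 - x) / y are the cotangents of the angles at 0 and 1 in the triangle
  0, x + iy, 1; on an arc of the circle their sum of angles is constant.\<close>

lemma circle_through_0_1_order_reversal:
  fixes x1 x2 y1 y2 k :: real
  assumes "y1 > 0" "y2 > 0"
    and "x1\<^sup>2 + y1\<^sup>2 - x1 = k * y1" "x2\<^sup>2 + y2\<^sup>2 - x2 = k * y2"
    and "x2 * y1 \<le> x1 * y2"
  shows "(1 - x1) * y2 \<le> (1 - x2) * y1"
proof -
  define A1 where "A1 = x1 + k * y1"
  define A2 where "A2 = x2 + k * y2"
  define B1 where "B1 = 1 - x1 + k * y1"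
  define B2 where "B2 = 1 - x2 + k * y2"
  have "A1 = x1\<^sup>2 + y1\<^sup>2" "A2 = x2\<^sup>2 + y2\<^sup>2"
    using assms(3,4) unfolding A1_def A2_def by linarith+
  then have A: "A1 > 0" "A2 > 0"
    using assms(1,2) by (simp_all add: add_nonneg_pos)
  have AB1: "A1 * B1 = (1 + k\<^sup>2) * y1\<^sup>2" and AB2: "A2 * B2 = (1 + k\<^sup>2) * y2\<^sup>2"
    using assms(3,4) unfolding A1_def B1_def A2_def B2_def
    by (simp_all add: power2_eq_square algebra_simps)
  have "y1 * A2 \<le> y2 * A1"
    using assms(5) unfolding A1_def A2_def by (simp add: algebra_simps)
  moreover have "(1 + k\<^sup>2) * y1 * y2 \<ge> 0"
    using assms(1,2) by simp
  ultimately have "(A1 * B1) * y2 * A2 \<le> (A2 * B2) * y1 * A1"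
    unfolding AB1 AB2 using mult_left_mono by (fastforce simp: power2_eq_square ac_simps)
  then have "B1 * y2 \<le> B2 * y1"
    using A by (simp add: ac_simps)
  then show ?thesis
    unfolding B1_def B2_def by (simp add: algebra_simps)
qed

lemma closed_segments_cross:
  fixes w1 w2 :: complex
  assumes same_side: "0 < Im w1 * Im w2"
    and order_at_0: "Re w2 * \<bar>Im w1\<bar> \<le> Re w1 * \<bar>Im w2\<bar>"
    and order_at_1: "(1 - Re w1) * \<bar>Im w2\<bar> \<le> (1 - Re w2) * \<bar>Im w1\<bar>"
  shows "\<exists>q \<in> closed_segment 0 w1 \<inter> closed_segment w2 1. Im q \<noteq> 0"
proof -
  define y1 y2 where "y1 = \<bar>Im w1\<bar>" and "y2 = \<bar>Im w2\<bar>"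
  have y: "y1 > 0" "y2 > 0" and Im: "Im w1 * y2 = Im w2 * y1"
    using same_side by (auto simp: y1_def y2_def abs_if zero_less_mult_iff)
  define D where "D = Re w1 * y2 + y1 - Re w2 * y1"
  have D: "y1 \<le> D" "y2 \<le> D"
    using order_at_0 order_at_1 by (simp_all add: D_def y1_def y2_def algebra_simps)
  define q where "q = of_real (y2 / D) * w1"
  have "q = (1 - y2 / D) *\<^sub>R 0 + (y2 / D) *\<^sub>R w1"
    by (simp add: q_def scaleR_conv_of_real)
  then have q1: "q \<in> closed_segment 0 w1"
    using y D unfolding in_segment by (intro conjI exI[of _ "y2 / D"]) auto
  have "of_real y2 * w1 = of_real y1 * w2 + of_real (D - y1)"
    using Im by (simp add: complex_eq_iff D_def algebra_simps)
  then have "q = (1 - (1 - y1 / D)) *\<^sub>R w2 + (1 - y1 / D) *\<^sub>R 1"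
    using y D by (simp add: q_def scaleR_conv_of_real field_simps)
  then have q2: "q \<in> closed_segment w2 1"
    using y D unfolding in_segment by (intro conjI exI[of _ "1 - y1 / D"]) auto
  have "Im q \<noteq> 0"
    using y D same_side by (auto simp: q_def)
  with q1 q2 show ?thesis by blast
qed

lemma bend_segments_cross:
  fixes a b1 b2 c :: complex
  defines "w1 \<equiv> (b1 - a) / (c - a)" and "w2 \<equiv> (b2 - a) / (c - a)"
  assumes "a \<noteq> c" and same_angle: "angle_at a b1 c = angle_at a b2 c"
    and same_side: "0 < Im w1 * Im w2"
    and order_at_a: "Re w2 * \<bar>Im w1\<bar> \<le> Re w1 * \<bar>Im w2\<bar>"
  shows "\<exists>q \<in> closed_segment a b1 \<inter> closed_segment b2 c. Im ((q - a) / (c - a)) \<noteq> 0"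
proof -
  define k where "k = cot (angle_at a b1 c)"
  have "Im w1 \<noteq> 0" "Im w2 \<noteq> 0"
    using same_side by auto
  then have "(Re w1)\<^sup>2 + \<bar>Im w1\<bar>\<^sup>2 - Re w1 = k * \<bar>Im w1\<bar>"
    and "(Re w2)\<^sup>2 + \<bar>Im w2\<bar>\<^sup>2 - Re w2 = k * \<bar>Im w2\<bar>"
    using angle_at_locus[of a c b1] angle_at_locus[of a c b2] \<open>a \<noteq> c\<close>
    by (simp_all add: k_def same_angle w1_def w2_def)
  then have "(1 - Re w1) * \<bar>Im w2\<bar> \<le> (1 - Re w2) * \<bar>Im w1\<bar>"
    using \<open>Im w1 \<noteq> 0\<close> \<open>Im w2 \<noteq> 0\<close> order_at_a
    by (intro circle_through_0_1_order_reversal[where k = k]) simp_all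
  then obtain q where q: "q \<in> closed_segment 0 w1" "q \<in> closed_segment w2 1" "Im q \<noteq> 0"
    using closed_segments_cross[OF same_side order_at_a] by blast
  have "a + (c - a) * w1 = b1" "a + (c - a) * w2 = b2"
    using \<open>a \<noteq> c\<close> by (simp_all add: w1_def w2_def)
  then have "a + (c - a) * q \<in> closed_segment a b1 \<inter> closed_segment b2 c"
    using affine_image_in_closed_segment[OF q(1), of a "c - a"]
      affine_image_in_closed_segment[OF q(2), of a "c - a"] by simp
  moreover have "(a + (c - a) * q - a) / (c - a) = q"
    using \<open>a \<noteq> c\<close> by simp
  ultimately show ?thesis
    using q(3) by metis
qed

lemma bend_edges_same_side_meet:
  fixes a b1 b2 c :: complex
  assumes "a \<noteq> c" and "angle_at a b1 c = angle_at a b2 c"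
    and "0 < Im ((b1 - a) / (c - a)) * Im ((b2 - a) / (c - a))"
  shows "\<exists>q \<in> (closed_segment a b1 \<union> closed_segment b1 c) \<inter>
               (closed_segment a b2 \<union> closed_segment b2 c). Im ((q - a) / (c - a)) \<noteq> 0"
proof (cases "Re ((b2 - a) / (c - a)) * \<bar>Im ((b1 - a) / (c - a))\<bar>
              \<le> Re ((b1 - a) / (c - a)) * \<bar>Im ((b2 - a) / (c - a))\<bar>")
  case True
  then show ?thesis
    using bend_segments_cross[of a c b1 b2] assms by blast
next
  case False
  then show ?thesis
    using bend_segments_cross[of a c b2 b1] assms by (force simp: mult.commute)
qed

lemma bend_edge_commute: "bend_edge \<alpha> u w C \<longleftrightarrow> bend_edge \<alpha> w u C"
proof -
  have "angle_at w b u = angle_at u b w" for b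
    by (simp add: angle_at_def inner_commute mult.commute)
  then show ?thesis
    unfolding bend_edge_def by (auto simp: insert_commute closed_segment_commute)
qed

lemma bend_edge_doubleton: "{u, w} = {a, c} \<Longrightarrow> bend_edge \<alpha> u w C \<longleftrightarrow> bend_edge \<alpha> a c C"
  by (metis doubleton_eq_iff bend_edge_commute)

lemma arc_midpoint_height_pos:
  assumes "0 < \<alpha>" "\<alpha> < pi"
  shows "0 < (1 + cos \<alpha>) / (2 * sin \<alpha>)"
proof -
  have "cos pi < cos \<alpha>"
    using assms by (intro cos_monotone_0_pi) auto
  moreover have "sin \<alpha> > 0"
    using assms by (intro sin_gt_zero)
  ultimately show ?thesis by simp
qed

text \<open>The midpoints of the two \<alpha>-arcs from a to c, one on each side of the line ac.\<close>

definition arc_midpoints :: "real \<Rightarrow> complex \<Rightarrow> complex \<Rightarrow> complex set" where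
  "arc_midpoints \<alpha> a c =
     {(a + c) / 2 + \<i> * (c - a) * of_real t | t. \<bar>t\<bar> = (1 + cos \<alpha>) / (2 * sin \<alpha>)}"

lemma arc_midpoints_commute: "arc_midpoints \<alpha> a c = arc_midpoints \<alpha> c a"
proof -
  have "(c + a) / 2 + \<i> * (a - c) * of_real t = (a + c) / 2 + \<i> * (c - a) * of_real (- t)" for t
    by (simp add: algebra_simps)
  then show ?thesis
    unfolding arc_midpoints_def by (smt (verit) Collect_cong abs_minus_cancel)
qed

lemma circle_arc_midpoint:
  fixes z0 :: complex and r \<theta> h :: real
  assumes "sin h \<noteq> 0"
  defines "P \<equiv> z0 + of_real r * cis \<theta>" and "Q \<equiv> z0 + of_real r * cis (\<theta> + 2 * h)"
  shows "z0 + of_real r * cis (\<theta> + h) =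
           (P + Q) / 2 - \<i> * (Q - P) * of_real ((1 - cos h) / (2 * sin h))"
proof -
  define \<omega> where "\<omega> = of_real r * cis (\<theta> + h)"
  have "P = z0 + \<omega> * cis (- h)" "Q = z0 + \<omega> * cis h"
    by (simp_all add: P_def Q_def \<omega>_def cis_mult algebra_simps)
  moreover have "cis h + cis (- h) = 2 * of_real (cos h)"
    and "cis h - cis (- h) = 2 * \<i> * of_real (sin h)"
    by (simp_all add: complex_eq_iff)
  ultimately have sum: "P + Q = 2 * z0 + \<omega> * (2 * of_real (cos h))"
    and diff: "Q - P = \<omega> * (2 * \<i> * of_real (sin h))"
    by (metis add.assoc add.commute distrib_left mult_2, simp add: algebra_simps)
  define l where "l = (1 - cos h) / (2 * sin h)"
  have "(P + Q) / 2 - \<i> * (Q - P) * of_real l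
      = z0 + \<omega> * (of_real (cos h) + of_real (2 * sin h * l))"
    unfolding sum diff by (simp add: algebra_simps)
  also have "2 * sin h * l = 1 - cos h"
    using assms(1) by (simp add: l_def)
  finally show ?thesis
    by (simp add: \<omega>_def l_def)
qed

lemma arc_edge_meets_arc_midpoints:
  assumes "0 < \<alpha>" "\<alpha> < pi" and "arc_edge \<alpha> a c C"
  shows "C \<inter> arc_midpoints \<alpha> a c \<noteq> {}"
proof -
  define h where "h = pi - \<alpha>"
  obtain z0 r \<theta> where C: "C = (\<lambda>t. z0 + of_real r * cis t) ` {\<theta> .. \<theta> + 2 * h}"
    and ends: "{a, c} = {z0 + of_real r * cis \<theta>, z0 + of_real r * cis (\<theta> + 2 * h)}"
    using assms(3) unfolding arc_edge_def h_def by blast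
  define P where "P = z0 + of_real r * cis \<theta>"
  define Q where "Q = z0 + of_real r * cis (\<theta> + 2 * h)"
  define m where "m = z0 + of_real r * cis (\<theta> + h)"
  have "m \<in> C"
    using assms(2) unfolding C m_def h_def by auto
  define l where "l = (1 + cos \<alpha>) / (2 * sin \<alpha>)"
  have "sin \<alpha> > 0"
    using assms(1,2) by (intro sin_gt_zero)
  then have "sin h \<noteq> 0" and "(1 - cos h) / (2 * sin h) = l"
    by (simp_all add: h_def l_def)
  then have "m = (P + Q) / 2 + \<i> * (Q - P) * of_real (- l)"
    using circle_arc_midpoint[of h z0 r \<theta>] by (simp add: m_def P_def Q_def)
  moreover have "\<bar>- l\<bar> = (1 + cos \<alpha>) / (2 * sin \<alpha>)"
    using arc_midpoint_height_pos[OF assms(1,2)] unfolding l_def[symmetric] by simp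
  ultimately have "m \<in> arc_midpoints \<alpha> P Q"
    unfolding arc_midpoints_def by blast
  moreover have "arc_midpoints \<alpha> a c = arc_midpoints \<alpha> P Q"
    using ends arc_midpoints_commute unfolding P_def Q_def by (metis doubleton_eq_iff)
  ultimately show ?thesis
    using \<open>m \<in> C\<close> by blast
qed

lemma arc_midpoints_normalized:
  assumes "a \<noteq> c" and "m \<in> arc_midpoints \<alpha> a c"
  obtains t where "\<bar>t\<bar> = (1 + cos \<alpha>) / (2 * sin \<alpha>)"
    and "(m - a) / (c - a) = 1 / 2 + \<i> * of_real t"
proof -
  obtain t where t: "\<bar>t\<bar> = (1 + cos \<alpha>) / (2 * sin \<alpha>)"
    and m: "m = (a + c) / 2 + \<i> * (c - a) * of_real t"
    using assms(2) unfolding arc_midpoints_def by blast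
  have "m - a = (c - a) * (1 / 2 + \<i> * of_real t)"
    unfolding m by (simp add: field_simps)
  with assms(1) t that show ?thesis by simp
qed

lemma arc_midpoint_off_line:
  assumes "0 < \<alpha>" "\<alpha> < pi" "a \<noteq> c" and "m \<in> arc_midpoints \<alpha> a c"
  shows "Im ((m - a) / (c - a)) \<noteq> 0"
proof -
  obtain t where "\<bar>t\<bar> = (1 + cos \<alpha>) / (2 * sin \<alpha>)" "(m - a) / (c - a) = 1 / 2 + \<i> * of_real t"
    using arc_midpoints_normalized[OF assms(3,4)] by blast
  then show ?thesis
    using arc_midpoint_height_pos[OF assms(1,2)] by auto
qed

lemma arc_midpoints_same_side_eq:
  assumes "a \<noteq> c" and "m1 \<in> arc_midpoints \<alpha> a c" "m2 \<in> arc_midpoints \<alpha> a c"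
    and "0 < Im ((m1 - a) / (c - a)) * Im ((m2 - a) / (c - a))"
  shows "m1 = m2"
proof -
  obtain t1 t2 where t: "\<bar>t1\<bar> = \<bar>t2\<bar>"
    and "(m1 - a) / (c - a) = 1 / 2 + \<i> * of_real t1"
    and "(m2 - a) / (c - a) = 1 / 2 + \<i> * of_real t2"
    using arc_midpoints_normalized[OF assms(1)] assms(2,3) by metis
  moreover have "t1 = t2"
    using t assms(4) calculation by (auto simp: abs_if zero_less_mult_iff split: if_splits)
  ultimately have "(m1 - a) / (c - a) = (m2 - a) / (c - a)"
    by simp
  with assms(1) show ?thesis by simp
qed

lemma arc_edge_doubleton: "{u, w} = {a, c} \<Longrightarrow> arc_edge \<alpha> u w C \<longleftrightarrow> arc_edge \<alpha> a c C"
  by (simp add: arc_edge_def)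

lemma plane_multigraph_parallel_edges_eq:
  assumes "plane_multigraph V E src tgt crv" and "e1 \<in> E" "e2 \<in> E"
    and "{src e1, tgt e1} = {a, c}" "{src e2, tgt e2} = {a, c}"
    and "q \<in> crv e1 \<inter> crv e2" "q \<notin> {a, c}"
  shows "e1 = e2"
  using assms unfolding plane_multigraph_def by blast

lemma plane_multigraph_parallel_edges_one_per_side:
  fixes witness :: "'e \<Rightarrow> complex \<Rightarrow> bool"
  assumes G: "plane_multigraph V E src tgt crv" and "a \<noteq> c"
    and witness_exists: "\<And>e. e \<in> E \<Longrightarrow> {src e, tgt e} = {a, c} \<Longrightarrow> \<exists>p. witness e p"
    and witness_off_line: "\<And>e p. witness e p \<Longrightarrow> p \<in> crv e \<and> Im ((p - a) / (c - a)) \<noteq> 0"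
    and witnesses_same_side_meet: "\<And>e1 e2 p1 p2. witness e1 p1 \<Longrightarrow> witness e2 p2 \<Longrightarrow>
           0 < Im ((p1 - a) / (c - a)) * Im ((p2 - a) / (c - a)) \<Longrightarrow>
           \<exists>q \<in> crv e1 \<inter> crv e2. Im ((q - a) / (c - a)) \<noteq> 0"
  shows "finite {e\<in>E. {src e, tgt e} = {a, c}} \<and>
         card {e\<in>E. {src e, tgt e} = {a, c}} \<le> 2 \<and>
         (\<forall>H\<in>{left_halfplane a c, right_halfplane a c}.
            \<forall>e1\<in>E. \<forall>e2\<in>E.
              {src e1, tgt e1} = {a, c} \<and> {src e2, tgt e2} = {a, c} \<and>
              crv e1 - {a, c} \<subseteq> H \<and> crv e2 - {a, c} \<subseteq> H \<longrightarrow> e1 = e2)"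
proof -
  define S where "S = {e\<in>E. {src e, tgt e} = {a, c}}"
  define side where "side p = (0 < Im ((p - a) / (c - a)))" for p
  have off_ac: "q \<notin> {a, c}" if "Im ((q - a) / (c - a)) \<noteq> 0" for q
    using that \<open>a \<noteq> c\<close> by auto
  have eq: "e1 = e2"
    if e: "e1 \<in> S" "e2 \<in> S" and p: "witness e1 p1" "witness e2 p2" and "side p1 = side p2"
    for e1 e2 p1 p2
  proof -
    have "0 < Im ((p1 - a) / (c - a)) * Im ((p2 - a) / (c - a))"
      using \<open>side p1 = side p2\<close> witness_off_line[OF p(1)] witness_off_line[OF p(2)]
      by (auto simp: side_def zero_less_mult_iff)
    then obtain q where "q \<in> crv e1 \<inter> crv e2" "Im ((q - a) / (c - a)) \<noteq> 0"
      using witnesses_same_side_meet p by blast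
    then show ?thesis
      using plane_multigraph_parallel_edges_eq[OF G] off_ac e unfolding S_def by blast
  qed
  have inj: "inj_on (\<lambda>e. side (SOME p. witness e p)) S"
  proof (rule inj_onI)
    fix e1 e2
    assume "e1 \<in> S" "e2 \<in> S" "side (SOME p. witness e1 p) = side (SOME p. witness e2 p)"
    moreover have "witness e (SOME p. witness e p)" if "e \<in> S" for e
      using witness_exists that unfolding S_def by (blast intro: someI_ex)
    ultimately show "e1 = e2"
      using eq by blast
  qed
  have "finite S"
    using finite_imageD[OF _ inj] by simp
  moreover have "card S \<le> 2"
    using card_inj_on_le[OF inj, of UNIV] by (simp add: card_UNIV_bool)
  moreover have "e1 = e2"
    if H: "H \<in> {left_halfplane a c, right_halfplane a c}" and e: "e1 \<in> S" "e2 \<in> S"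
      and in_H: "crv e1 - {a, c} \<subseteq> H" "crv e2 - {a, c} \<subseteq> H" for H e1 e2
  proof -
    obtain p1 p2 where p: "witness e1 p1" "witness e2 p2"
      using witness_exists e unfolding S_def by blast
    then have "p1 \<in> H" "p2 \<in> H"
      using witness_off_line off_ac in_H by blast+
    then have "side p1 = side p2"
      using H \<open>a \<noteq> c\<close> by (auto simp: side_def left_halfplane_eq right_halfplane_eq)
    then show ?thesis
      using eq e p by blast
  qed
  ultimately show ?thesis
    unfolding S_def by blast
qed

theorem proposition1:
  fixes V :: "complex set" and E :: "'e set"
    and src tgt :: "'e \<Rightarrow> complex" and crv :: "'e \<Rightarrow> complex set"
    and \<alpha> :: real and a c :: complex
  assumes "0 < \<alpha>" and "\<alpha> < pi" and "a \<noteq> c"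
    and "plane_multigraph V E src tgt crv"
    and "(\<forall>e\<in>E. bend_edge \<alpha> (src e) (tgt e) (crv e)) \<or>
         (\<forall>e\<in>E. arc_edge \<alpha> (src e) (tgt e) (crv e))"
  shows "finite {e\<in>E. {src e, tgt e} = {a, c}} \<and>
         card {e\<in>E. {src e, tgt e} = {a, c}} \<le> 2 \<and>
         (\<forall>H\<in>{left_halfplane a c, right_halfplane a c}.
            \<forall>e1\<in>E. \<forall>e2\<in>E.
              {src e1, tgt e1} = {a, c} \<and> {src e2, tgt e2} = {a, c} \<and>
              crv e1 - {a, c} \<subseteq> H \<and> crv e2 - {a, c} \<subseteq> H \<longrightarrow> e1 = e2)"
  using assms(5)
proof
  assume bends: "\<forall>e\<in>E. bend_edge \<alpha> (src e) (tgt e) (crv e)"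
  show ?thesis
  proof (rule plane_multigraph_parallel_edges_one_per_side[OF assms(4,3), where witness =
        "\<lambda>e b. \<not> collinear {a, b, c} \<and> angle_at a b c = \<alpha> \<and>
               crv e = closed_segment a b \<union> closed_segment b c"])
    show "\<exists>b. \<not> collinear {a, b, c} \<and> angle_at a b c = \<alpha> \<and>
              crv e = closed_segment a b \<union> closed_segment b c"
      if "e \<in> E" "{src e, tgt e} = {a, c}" for e
      using bends that bend_edge_doubleton unfolding bend_edge_def by blast
  qed (use collinear_if_Im_div_eq_0 bend_edges_same_side_meet[OF assms(3)] in auto)
next
  assume arcs: "\<forall>e\<in>E. arc_edge \<alpha> (src e) (tgt e) (crv e)"
  show ?thesis
  proof (rule plane_multigraph_parallel_edges_one_per_side[OF assms(4,3), where witness =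
        "\<lambda>e m. m \<in> crv e \<inter> arc_midpoints \<alpha> a c"])
    show "\<exists>m. m \<in> crv e \<inter> arc_midpoints \<alpha> a c" if "e \<in> E" "{src e, tgt e} = {a, c}" for e
      using arcs that arc_edge_doubleton arc_edge_meets_arc_midpoints[OF assms(1,2)] by blast
  qed (use arc_midpoint_off_line[OF assms(1-3)] arc_midpoints_same_side_eq[OF assms(3)] in blast)+
qed

end
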